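(* Let $s>0$ and let $Z$ be a random variable that under $\mathbb{Q}$ has mean $0$, variance $1$ and a density $f_Z^{\mathbb{Q}}$ with $f_Z^{\mathbb{Q}}(x)>0$ for all $x\in\mathbb{R}$. Let $S_T=S_0e^{(r+\omega)T+s\sqrt{T}Z}$ where $\omega\in\mathbb{R}$ is such that $e^{-rT}E_{\mathbb{Q}}[S_T]=S_0$. Let $h^*>0$ and let $\mathcal{H}\subset[h^*,\infty)$ with $h^*\in\mathcal{H}$ and $E_{\mathbb{Q}}[S_T^h]<\infty$ for all $h\in\mathcal{H}$. For $h\in\mathcal{H}$ define $\mathbb{P}^h$ by $\frac{d\mathbb{P}^h}{d\mathbb{Q}}=\frac{S_T^h}{E_{\mathbb{Q}}[S_T^h]}$, and let $\mathcal{P}=\{\mathbb{P}^h:h\in\mathcal{H}\}$. Then $F^{\mathbb{P}^{h^*}}_{S_T}\preceq_{\mathbb{F}_{FSD}}F^{\mathbb{P}^h}_{S_T}$ (hence also $\preceq_{\mathbb{F}_{SSD}}$) for all $h\in\mathcal{H}$, $\mathbb{P}^{h^*}$ is a least favorable measure with respect to $\mathbb{F}_{FSD}$, and $\ell^{\mathbb{P}^{h^*}}$ is continuously distributed under $\mathbb{P}^{h^*}$. If moreover $h^*\in(0,1]$, then $\mathbb{P}^{h^*}$ is also a least favorable measure with respect to $\mathbb{F}_{SSD}$.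
   Context: Standing setting: fix $T>0$, $r\in\mathbb{R}$, $S_0>0$, and write $\mathbb{R}_+=[0,\infty)$; $\mathcal{F}=\sigma(S_T)$. For $\mathbb{P}\in\mathcal{P}$, $\ell^{\mathbb{P}}=d\mathbb{P}/d\mathbb{Q}$; $F_X^{\mathbb{P}}$ is the cdf of $X$ under $\mathbb{P}$. For a set $\mathbb{F}$ of measurable functions $\mathbb{R}_+\to\mathbb{R}$ and cdfs $F,G$ on $\mathbb{R}_+$, $F\preceq_{\mathbb{F}}G$ means $\int f\,dF\le\int f\,dG$ for all $f\in\mathbb{F}$ with finite integrals. $\mathbb{F}_{FSD}$ is the set of all non-decreasing functions $\mathbb{R}_+\to\mathbb{R}$; $\mathbb{F}_{SSD}$ is the set of all non-decreasing concave functions $\mathbb{R}_+\to\mathbb{R}$. A measure $\mathbb{P}^*\in\mathcal{P}$ with $\ell^*=d\mathbb{P}^*/d\mathbb{Q}$ is least favorable w.r.t. $\mathbb{F}$ if $F_{\ell^*}^{\mathbb{P}^*}\preceq_{\mathbb{F}}F_{\ell^*}^{\mathbb{P}}$ for all $\mathbb{P}\in\mathcal{P}$. *)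

theory Defs
  imports "HOL-Probability.Probability"
begin

definition stoch_le :: "(real \<Rightarrow> real) set \<Rightarrow> real measure \<Rightarrow> real measure \<Rightarrow> bool" where
  "stoch_le FF \<mu> \<nu> \<longleftrightarrow>
     (\<forall>f\<in>FF. integrable \<mu> f \<and> integrable \<nu> f \<longrightarrow> (\<integral>x. f x \<partial>\<mu>) \<le> (\<integral>x. f x \<partial>\<nu>))"

definition F_FSD :: "(real \<Rightarrow> real) set" where
  "F_FSD = {f. mono_on {0..} f}"

definition F_SSD :: "(real \<Rightarrow> real) set" where
  "F_SSD = {f. mono_on {0..} f \<and> concave_on {0..} f}"

definition lik :: "'a measure \<Rightarrow> 'a measure \<Rightarrow> 'a \<Rightarrow> real" where
  "lik Q P = (\<lambda>x. enn2real (RN_deriv Q P x))"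

definition least_favorable ::
  "(real \<Rightarrow> real) set \<Rightarrow> 'a measure set \<Rightarrow> 'a measure \<Rightarrow> 'a measure \<Rightarrow> bool" where
  "least_favorable FF Pset Q Pstar \<longleftrightarrow> Pstar \<in> Pset \<and>
     (\<forall>P\<in>Pset. stoch_le FF (distr Pstar borel (lik Q Pstar)) (distr P borel (lik Q Pstar)))"

definition esscher :: "'a measure \<Rightarrow> ('a \<Rightarrow> real) \<Rightarrow> real \<Rightarrow> 'a measure" where
  "esscher Q ST h = density Q (\<lambda>x. ennreal (ST x powr h / (\<integral>y. ST y powr h \<partial>Q)))"

end

theory Submission
  imports Defs
begin

text \<open>For \<open>a \<le> b\<close> the density ratio \<open>dP\<^sup>b/dP\<^sup>a\<close> is a non-decreasing function of \<open>S\<^sub>T\<close>, so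
  \<open>P\<^sup>b\<close> shifts mass towards large \<open>S\<^sub>T\<close>: by a Chebyshev covariance argument every function
  non-decreasing in \<open>S\<^sub>T\<close> has a larger \<open>P\<^sup>b\<close>-mean. The likelihood ratio of \<open>P\<^sup>h\<^sup>*\<close> is
  itself non-decreasing in \<open>S\<^sub>T\<close>, which gives least favourability, and it is an injective
  function of the atomless \<open>Z\<close>, which gives continuity of its distribution function.
  Second order dominance is weaker than first order dominance.\<close>

lemma stoch_le_subset: "stoch_le A \<mu> \<nu> \<Longrightarrow> B \<subseteq> A \<Longrightarrow> stoch_le B \<mu> \<nu>"
  unfolding stoch_le_def by blast

lemma F_SSD_subset_F_FSD: "F_SSD \<subseteq> F_FSD"
  unfolding F_SSD_def F_FSD_def by auto

lemma integral_powr_pos: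
  fixes S :: "'a \<Rightarrow> real"
  assumes "prob_space M" and "\<forall>x. S x > 0" and "integrable M (\<lambda>x. S x powr c)"
  shows "(\<integral>x. S x powr c \<partial>M) > 0"
proof -
  interpret prob_space M by fact
  have "(\<integral>x. S x powr c \<partial>M) \<ge> 0" by (simp add: Bochner_Integration.integral_nonneg)
  moreover have "(\<integral>x. S x powr c \<partial>M) \<noteq> 0"
  proof
    assume "(\<integral>x. S x powr c \<partial>M) = 0"
    then have "AE x in M. S x powr c = 0"
      using integral_nonneg_eq_0_iff_AE[OF assms(3)] by auto
    then have "AE x in M. False"
      by (rule eventually_mono) (metis assms(2) less_irrefl powr_eq_0_iff)
    then show False by simp
  qed
  ultimately show ?thesis by linarith
qed

text \<open>With \<open>s\<^sub>0\<close> the point where the two normalized weights cross, both factors change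
  sign at \<open>s\<^sub>0\<close>.\<close>
lemma powr_weight_diff_mult_mono_nonneg:
  fixes a b A B y :: real and f :: "real \<Rightarrow> real"
  assumes "a < b" and "A > 0" and "B > 0" and "y > 0" and f: "mono_on {0<..} f"
  shows "(y powr b / B - y powr a / A) * (f y - f ((B / A) powr (1 / (b - a)))) \<ge> 0"
proof -
  define d where "d = b - a"
  define s0 where "s0 = (B / A) powr (1 / d)"
  have d: "d > 0" using assms(1) by (simp add: d_def)
  have s0: "s0 > 0" using assms(2,3) by (simp add: s0_def)
  have s0d: "s0 powr d = B / A" using assms(2,3) d by (simp add: s0_def powr_powr)
  have split: "y powr b / B - y powr a / A = y powr a * (y powr d / B - 1 / A)"
    by (simp add: d_def powr_add[symmetric] field_simps)
  have "(y powr d / B - 1 / A) * (f y - f s0) \<ge> 0"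
  proof (cases "y \<ge> s0")
    case True
    then have "y powr d \<ge> B / A" using s0d powr_mono2[of d s0 y] d s0 by simp
    then have "y powr d / B - 1 / A \<ge> 0" using assms(2,3) by (simp add: field_simps)
    moreover have "f y - f s0 \<ge> 0" using f True s0 by (auto simp: mono_on_def)
    ultimately show ?thesis by simp
  next
    case False
    then have "y powr d < B / A" using s0d powr_less_mono2[of d y s0] d assms(4) by simp
    then have "y powr d / B - 1 / A \<le> 0" using assms(2,3) by (simp add: field_simps)
    moreover have "f y - f s0 \<le> 0" using f False assms(4) by (auto simp: mono_on_def)
    ultimately show ?thesis by (simp add: mult_nonpos_nonpos)
  qed
  then show ?thesis unfolding split s0_def d_def[symmetric] by (simp add: mult.assoc)
qed

text \<open>Chebyshev's association inequality for the weights \<open>S\<^sup>a\<close> and \<open>S\<^sup>b\<close>: centring at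
  \<open>f s\<^sub>0\<close> is free because both weights integrate to one.\<close>
lemma integral_normalized_powr_weight_mono:
  fixes S :: "'a \<Rightarrow> real" and f :: "real \<Rightarrow> real"
  assumes M: "prob_space M" and S: "\<forall>x. S x > 0" and "a \<le> b"
    and ia: "integrable M (\<lambda>x. S x powr a)" and ib: "integrable M (\<lambda>x. S x powr b)"
    and f: "mono_on {0<..} f"
    and ifa: "integrable M (\<lambda>x. S x powr a / (\<integral>y. S y powr a \<partial>M) * f (S x))"
    and ifb: "integrable M (\<lambda>x. S x powr b / (\<integral>y. S y powr b \<partial>M) * f (S x))"
  shows "(\<integral>x. S x powr a / (\<integral>y. S y powr a \<partial>M) * f (S x) \<partial>M)
       \<le> (\<integral>x. S x powr b / (\<integral>y. S y powr b \<partial>M) * f (S x) \<partial>M)"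
proof (cases "a = b")
  case False
  define A where "A = (\<integral>y. S y powr a \<partial>M)"
  define B where "B = (\<integral>y. S y powr b \<partial>M)"
  define c where "c = f ((B / A) powr (1 / (b - a)))"
  have A: "A > 0" and B: "B > 0"
    using integral_powr_pos[OF M S] ia ib by (auto simp: A_def B_def)
  have "0 \<le> (\<integral>x. (S x powr b / B - S x powr a / A) * (f (S x) - c) \<partial>M)"
    using powr_weight_diff_mult_mono_nonneg[OF _ A B _ f] False \<open>a \<le> b\<close> S
    by (intro integral_nonneg_AE) (auto simp: c_def)
  also have "\<dots> = (\<integral>x. S x powr b / B * f (S x) \<partial>M) - (\<integral>x. S x powr a / A * f (S x) \<partial>M)
      - c * ((\<integral>x. S x powr b / B \<partial>M) - (\<integral>x. S x powr a / A \<partial>M))"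
    using ifa ifb ia ib unfolding A_def[symmetric] B_def[symmetric]
    by (simp add: algebra_simps diff_divide_distrib Bochner_Integration.integral_diff)
  also have "(\<integral>x. S x powr b / B \<partial>M) = 1" using B by (simp add: B_def)
  also have "(\<integral>x. S x powr a / A \<partial>M) = 1" using A by (simp add: A_def)
  finally show ?thesis unfolding A_def B_def by simp
qed simp

lemma integrable_distr_density:
  fixes g :: "'a \<Rightarrow> real"
  assumes g: "g \<in> borel_measurable M" "\<forall>x. g x \<ge> 0" and Y: "Y \<in> borel_measurable M"
    and F: "integrable (distr (density M (\<lambda>x. ennreal (g x))) borel Y) F"
  shows "integrable M (\<lambda>x. g x * F (Y x))"
proof -
  have Fm: "F \<in> borel_measurable borel" using F by auto
  have "integrable (density M (\<lambda>x. ennreal (g x))) (\<lambda>x. F (Y x))"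
    using F integrable_distr_eq[of Y _ borel F] Y Fm by simp
  then show ?thesis using integrable_density[of "\<lambda>x. F (Y x)" M g] g Y Fm by simp
qed

lemma integral_distr_density:
  fixes g :: "'a \<Rightarrow> real"
  assumes g: "g \<in> borel_measurable M" "\<forall>x. g x \<ge> 0" and Y: "Y \<in> borel_measurable M"
    and F: "F \<in> borel_measurable borel"
  shows "(\<integral>y. F y \<partial>distr (density M (\<lambda>x. ennreal (g x))) borel Y) = (\<integral>x. g x * F (Y x) \<partial>M)"
  using integral_distr[of Y "density M (\<lambda>x. ennreal (g x))" borel F]
    integral_density[of "\<lambda>x. F (Y x)" M g] g Y F by simp

definition esscher_weight :: "'a measure \<Rightarrow> ('a \<Rightarrow> real) \<Rightarrow> real \<Rightarrow> 'a \<Rightarrow> real" where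
  "esscher_weight Q S h x = S x powr h / (\<integral>y. S y powr h \<partial>Q)"

lemma esscher_eq_density: "esscher Q S h = density Q (\<lambda>x. ennreal (esscher_weight Q S h x))"
  by (simp add: esscher_def esscher_weight_def)

lemma esscher_weight_nonneg: "esscher_weight Q S h x \<ge> 0"
  unfolding esscher_weight_def
  by (intro divide_nonneg_nonneg) (simp_all add: Bochner_Integration.integral_nonneg)

lemma borel_measurable_esscher_weight [measurable]:
  "S \<in> borel_measurable Q \<Longrightarrow> esscher_weight Q S h \<in> borel_measurable Q"
  unfolding esscher_weight_def by simp

lemma sets_esscher [measurable_cong]: "sets (esscher Q S h) = sets Q"
  by (simp add: esscher_def)

lemma prob_space_esscher:
  fixes S :: "'a \<Rightarrow> real"
  assumes Q: "prob_space Q" and S: "S \<in> borel_measurable Q" "\<forall>x. S x > 0"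
    and i: "integrable Q (\<lambda>x. S x powr h)"
  shows "prob_space (esscher Q S h)"
proof (rule prob_spaceI)
  have "emeasure (esscher Q S h) (space (esscher Q S h)) = (\<integral>\<^sup>+x. esscher_weight Q S h x \<partial>Q)"
    using S by (simp add: esscher_eq_density emeasure_density)
  also have "\<dots> = ennreal (\<integral>x. esscher_weight Q S h x \<partial>Q)"
    using i S by (intro nn_integral_eq_integral) (auto simp: esscher_weight_nonneg esscher_weight_def)
  also have "(\<integral>x. esscher_weight Q S h x \<partial>Q) = 1"
    using integral_powr_pos[OF Q S(2) i] by (simp add: esscher_weight_def)
  finally show "emeasure (esscher Q S h) (space (esscher Q S h)) = 1" by simp
qed

lemma AE_lik_esscher:
  assumes "sigma_finite_measure Q" and "S \<in> borel_measurable Q"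
  shows "AE x in Q. lik Q (esscher Q S h) x = esscher_weight Q S h x"
proof -
  have "AE x in Q. ennreal (esscher_weight Q S h x) = RN_deriv Q (esscher Q S h) x"
    using assms by (intro sigma_finite_measure.RN_deriv_unique) (auto simp: esscher_eq_density)
  then show ?thesis
    by (rule eventually_mono) (metis lik_def enn2real_ennreal esscher_weight_nonneg)
qed

lemma distr_esscher_lik:
  assumes "sigma_finite_measure Q" and S: "S \<in> borel_measurable Q"
  shows "distr (esscher Q S h) borel (lik Q (esscher Q S k))
       = distr (esscher Q S h) borel (esscher_weight Q S k)"
proof (rule distr_cong_AE)
  show "AE x in esscher Q S h. lik Q (esscher Q S k) x = esscher_weight Q S k x"
    unfolding esscher_eq_density[of Q S h] using AE_lik_esscher[OF assms, of k] S
    by (subst AE_density) (auto elim: eventually_mono)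
qed (use S in \<open>auto simp: lik_def\<close>)

lemma stoch_le_F_FSD_distr_esscher:
  fixes S :: "'a \<Rightarrow> real" and \<phi> :: "real \<Rightarrow> real"
  assumes Q: "prob_space Q" and S: "S \<in> borel_measurable Q" "\<forall>x. S x > 0" and "a \<le> b"
    and ia: "integrable Q (\<lambda>x. S x powr a)" and ib: "integrable Q (\<lambda>x. S x powr b)"
    and \<phi>: "\<phi> \<in> borel_measurable borel" "mono_on {0<..} \<phi>" "\<forall>y>0. \<phi> y \<ge> 0"
  shows "stoch_le F_FSD (distr (esscher Q S a) borel (\<lambda>x. \<phi> (S x)))
                        (distr (esscher Q S b) borel (\<lambda>x. \<phi> (S x)))"
  unfolding stoch_le_def
proof (intro ballI impI, elim conjE)
  fix f assume "f \<in> F_FSD"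
    and fa: "integrable (distr (esscher Q S a) borel (\<lambda>x. \<phi> (S x))) f"
    and fb: "integrable (distr (esscher Q S b) borel (\<lambda>x. \<phi> (S x))) f"
  have f\<phi>: "mono_on {0<..} (\<lambda>y. f (\<phi> y))"
    using \<open>f \<in> F_FSD\<close> \<phi>(2,3) unfolding F_FSD_def mono_on_def by auto
  have fm: "f \<in> borel_measurable borel" using fa by auto
  show "(\<integral>y. f y \<partial>distr (esscher Q S a) borel (\<lambda>x. \<phi> (S x)))
      \<le> (\<integral>y. f y \<partial>distr (esscher Q S b) borel (\<lambda>x. \<phi> (S x)))"
    using integral_normalized_powr_weight_mono[OF Q S(2) \<open>a \<le> b\<close> ia ib f\<phi>]
      integrable_distr_density[OF _ _ _ fa[unfolded esscher_eq_density]]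
      integrable_distr_density[OF _ _ _ fb[unfolded esscher_eq_density]]
      integral_distr_density[OF _ _ _ fm, of "esscher_weight Q S _" Q]
    using S \<phi>(1) by (simp add: esscher_weight_nonneg esscher_eq_density esscher_weight_def)
qed

lemma least_favorable_F_FSD_esscher:
  fixes S :: "'a \<Rightarrow> real"
  assumes Q: "prob_space Q" and S: "S \<in> borel_measurable Q" "\<forall>x. S x > 0"
    and "0 \<le> h\<^sub>0" and "H \<subseteq> {h\<^sub>0..}" and "h\<^sub>0 \<in> H"
    and H_int: "\<forall>h\<in>H. integrable Q (\<lambda>x. S x powr h)"
  shows "least_favorable F_FSD (esscher Q S ` H) Q (esscher Q S h\<^sub>0)"
  unfolding least_favorable_def
proof (intro conjI ballI)
  show "esscher Q S h\<^sub>0 \<in> esscher Q S ` H" using \<open>h\<^sub>0 \<in> H\<close> by simp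
  fix P assume "P \<in> esscher Q S ` H"
  then obtain h where "h \<in> H" and P: "P = esscher Q S h" by auto
  define \<phi> where "\<phi> = (\<lambda>y. y powr h\<^sub>0 / (\<integral>y. S y powr h\<^sub>0 \<partial>Q))"
  have \<phi>: "\<phi> \<in> borel_measurable borel" "mono_on {0<..} \<phi>" "\<forall>y>0. \<phi> y \<ge> 0"
    using \<open>0 \<le> h\<^sub>0\<close> Bochner_Integration.integral_nonneg[of Q "\<lambda>y. S y powr h\<^sub>0"]
    by (auto simp: \<phi>_def mono_on_def intro!: divide_right_mono powr_mono2)
  have "stoch_le F_FSD (distr (esscher Q S h\<^sub>0) borel (\<lambda>x. \<phi> (S x)))
                      (distr (esscher Q S h) borel (\<lambda>x. \<phi> (S x)))"
    using \<open>H \<subseteq> {h\<^sub>0..}\<close> \<open>h \<in> H\<close> \<open>h\<^sub>0 \<in> H\<close> H_int \<phi>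
    by (intro stoch_le_F_FSD_distr_esscher[OF Q S]) auto
  moreover have "esscher_weight Q S h\<^sub>0 = (\<lambda>x. \<phi> (S x))"
    by (simp add: esscher_weight_def \<phi>_def fun_eq_iff)
  ultimately show "stoch_le F_FSD (distr (esscher Q S h\<^sub>0) borel (lik Q (esscher Q S h\<^sub>0)))
      (distr P borel (lik Q (esscher Q S h\<^sub>0)))"
    unfolding P using distr_esscher_lik[OF prob_space_imp_sigma_finite[OF Q] S(1)] by simp
qed

lemma isCont_cdf_distr:
  fixes X :: "'a \<Rightarrow> real"
  assumes "prob_space M" and X: "X \<in> borel_measurable M" and "AE x in M. X x \<noteq> c"
  shows "isCont (cdf (distr M borel X)) c"
proof -
  interpret real_distribution "distr M borel X"
    using prob_space.real_distribution_distr[OF assms(1)] X by simp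
  have "AE y in distr M borel X. y \<noteq> c"
    using \<open>AE x in M. X x \<noteq> c\<close> X by (subst AE_distr_iff) auto
  then have "emeasure (distr M borel X) {y \<in> space (distr M borel X). y = c} = 0"
    by (rule emeasure_eq_0_AE)
  then have "measure (distr M borel X) {c} = 0" by (simp add: measure_def)
  then show ?thesis by (simp add: isCont_cdf)
qed

lemma AE_distributed_lborel_neq:
  fixes X :: "'a \<Rightarrow> real"
  assumes X: "distributed M lborel X f"
  shows "AE x in M. X x \<noteq> z"
proof -
  have "AE y in distr M lborel X. y \<noteq> z"
    unfolding distributed_distr_eq_density[OF X]
    using AE_lborel_singleton[of z] distributed_borel_measurable[OF X]
    by (subst AE_density) auto
  then show ?thesis
    using distributed_measurable[OF X] by (subst (asm) AE_distr_iff) auto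
qed

lemma inj_powr_divide:
  fixes \<sigma> :: "real \<Rightarrow> real"
  assumes "inj \<sigma>" and "\<forall>z. \<sigma> z > 0" and "h \<noteq> 0" and "E \<noteq> 0"
  shows "inj (\<lambda>z. \<sigma> z powr h / E)"
proof (rule injI)
  fix z w assume "\<sigma> z powr h / E = \<sigma> w powr h / E"
  then have "(\<sigma> z powr h) powr (1 / h) = (\<sigma> w powr h) powr (1 / h)"
    using \<open>E \<noteq> 0\<close> by simp
  moreover have "\<sigma> z > 0" "\<sigma> w > 0" using assms(2) by auto
  ultimately have "\<sigma> z = \<sigma> w" using \<open>h \<noteq> 0\<close> by (simp add: powr_powr)
  then show "z = w" using \<open>inj \<sigma>\<close> by (simp add: inj_eq)
qed

lemma isCont_cdf_lik_esscher:
  fixes Z :: "'a \<Rightarrow> real" and \<sigma> :: "real \<Rightarrow> real"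
  assumes Q: "prob_space Q" and Z: "distributed Q lborel Z f"
    and \<sigma>: "\<sigma> \<in> borel_measurable borel" "\<forall>z. \<sigma> z > 0" "inj \<sigma>"
    and "h \<noteq> 0" and i: "integrable Q (\<lambda>x. \<sigma> (Z x) powr h)"
  shows "isCont (cdf (distr (esscher Q (\<lambda>x. \<sigma> (Z x)) h) borel
                           (lik Q (esscher Q (\<lambda>x. \<sigma> (Z x)) h)))) c"
proof -
  define S where "S = (\<lambda>x. \<sigma> (Z x))"
  define w where "w = (\<lambda>z. \<sigma> z powr h / (\<integral>y. S y powr h \<partial>Q))"
  have Sm: "S \<in> borel_measurable Q"
    using \<sigma>(1) distributed_measurable[OF Z] by (simp add: S_def)
  have S: "\<forall>x. S x > 0" using \<sigma>(2) by (simp add: S_def)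
  have iS: "integrable Q (\<lambda>x. S x powr h)" using i by (simp add: S_def)
  have "inj w"
    unfolding w_def using integral_powr_pos[OF Q S iS] \<sigma> \<open>h \<noteq> 0\<close>
    by (intro inj_powr_divide) auto
  have "AE x in Q. lik Q (esscher Q S h) x \<noteq> c"
  proof (cases "c \<in> range w")
    case True
    then obtain z where "c = w z" by auto
    show ?thesis
      using AE_lik_esscher[OF prob_space_imp_sigma_finite[OF Q] Sm, of h]
        AE_distributed_lborel_neq[OF Z, of z]
    proof eventually_elim
      case (elim x)
      then have "lik Q (esscher Q S h) x = w (Z x)"
        by (simp add: esscher_weight_def w_def S_def)
      then show ?case
        using \<open>inj w\<close> \<open>c = w z\<close> \<open>Z x \<noteq> z\<close> by (metis injD)
    qed
  next
    case False
    show ?thesis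
      using AE_lik_esscher[OF prob_space_imp_sigma_finite[OF Q] Sm, of h]
      by eventually_elim (use False in \<open>auto simp: esscher_weight_def w_def S_def\<close>)
  qed
  then have "AE x in esscher Q S h. lik Q (esscher Q S h) x \<noteq> c"
    unfolding esscher_eq_density[of Q S h] using Sm
    by (subst AE_density) (auto elim: eventually_mono)
  then show ?thesis
    unfolding S_def[symmetric]
    using prob_space_esscher[OF Q Sm S] i Sm
    by (intro isCont_cdf_distr) (auto simp: S_def lik_def)
qed

theorem mainTheorem7:
  fixes Q :: "'a measure" and Z :: "'a \<Rightarrow> real" and fZ :: "real \<Rightarrow> real"
    and T r S0 s \<omega> hstar :: real and H :: "real set" and ST :: "'a \<Rightarrow> real"
  assumes T: "T > 0" and S0: "S0 > 0" and s: "s > 0"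
    and Q: "prob_space Q"
    and Zdens: "distributed Q lborel Z (\<lambda>x. ennreal (fZ x))"
    and fZpos: "\<forall>x. fZ x > 0"
    and Zint: "integrable Q Z"
    and Zmean: "prob_space.expectation Q Z = 0"
    and Zvar: "prob_space.variance Q Z = 1"
    and ST_def: "ST = (\<lambda>x. S0 * exp ((r + \<omega>) * T + s * sqrt T * Z x))"
    and ST_int: "integrable Q ST"
    and omega: "exp (- r * T) * prob_space.expectation Q ST = S0"
    and hstar: "hstar > 0"
    and H_sub: "H \<subseteq> {hstar..}" and hstar_in: "hstar \<in> H"
    and H_int: "\<forall>h\<in>H. integrable Q (\<lambda>x. ST x powr h)"
  shows "(\<forall>h\<in>H. stoch_le F_FSD (distr (esscher Q ST hstar) borel ST)
                              (distr (esscher Q ST h) borel ST))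
       \<and> (\<forall>h\<in>H. stoch_le F_SSD (distr (esscher Q ST hstar) borel ST)
                              (distr (esscher Q ST h) borel ST))
       \<and> least_favorable F_FSD (esscher Q ST ` H) Q (esscher Q ST hstar)
       \<and> (\<forall>x. isCont (cdf (distr (esscher Q ST hstar) borel (lik Q (esscher Q ST hstar)))) x)
       \<and> (hstar \<le> 1 \<longrightarrow> least_favorable F_SSD (esscher Q ST ` H) Q (esscher Q ST hstar))"
proof -
  define \<sigma> where "\<sigma> = (\<lambda>z. S0 * exp ((r + \<omega>) * T + s * sqrt T * z))"
  have ST_\<sigma>: "ST = (\<lambda>x. \<sigma> (Z x))" by (simp add: ST_def \<sigma>_def)
  have \<sigma>: "\<sigma> \<in> borel_measurable borel" "\<forall>z. \<sigma> z > 0" "inj \<sigma>"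
    using S0 s T by (auto simp: \<sigma>_def inj_def)
  have STm: "ST \<in> borel_measurable Q"
    using \<sigma>(1) distributed_measurable[OF Zdens] by (simp add: ST_\<sigma>)
  have STpos: "\<forall>x. ST x > 0" using \<sigma>(2) by (simp add: ST_\<sigma>)
  have fsd: "stoch_le F_FSD (distr (esscher Q ST hstar) borel ST) (distr (esscher Q ST h) borel ST)"
    if "h \<in> H" for h
    using stoch_le_F_FSD_distr_esscher[OF Q STm STpos, of hstar h "\<lambda>y. y"] that H_sub hstar_in H_int
    by (auto simp: mono_on_def)
  have lf: "least_favorable F_FSD (esscher Q ST ` H) Q (esscher Q ST hstar)"
    using least_favorable_F_FSD_esscher[OF Q STm STpos] hstar H_sub hstar_in H_int by simp
  have "\<forall>c. isCont (cdf (distr (esscher Q ST hstar) borel (lik Q (esscher Q ST hstar)))) c"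
    using isCont_cdf_lik_esscher[OF Q Zdens \<sigma>] hstar hstar_in H_int by (simp add: ST_\<sigma>)
  then show ?thesis
    using fsd lf stoch_le_subset[OF _ F_SSD_subset_F_FSD]
    unfolding least_favorable_def by blast
qed

end
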